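(* Let $f:\mathbb{R}^n\to\mathbb{R}$ ($n\ge 1$) be a multivariate polynomial of degree at most $4$, and let $\mu_f:\mathbb{R}^n\times(0,\infty)\to\mathbb{R}$ be its Steklov function, \[ \mu_f(x,t) := \frac{1}{(2t)^n}\int_{x_n-t}^{x_n+t}\cdots\int_{x_1-t}^{x_1+t} f(\tau_1,\ldots,\tau_n)\,d\tau_1\cdots d\tau_n,\qquad x=(x_1,\ldots,x_n). \] Then for all $x\in\mathbb{R}^n$ and $t>0$, \[ \mu_f(x,t) = f(x) + \frac{t^2}{6}\sum_{i=1}^n f_{ii}(x) + \left(\frac{1}{120}\sum_{i=1}^n f_{iiii} + \frac{1}{36}\sum_{\substack{i,j=1\\ j>i}}^n f_{iijj}\right)t^4, \] where $f_{ii}:=\partial^2 f/\partial x_i^2$, $f_{iiii}:=\partial^4 f/\partial x_i^4$ and $f_{iijj}:=\partial^4 f/\partial x_i^2\partial x_j^2$ (the fourth-order derivatives being constants). *)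

theory Defs
  imports "HOL-Analysis.Analysis"
begin

definition exps_le :: "nat \<Rightarrow> ('n::finite \<Rightarrow> nat) set" where
  "exps_le d = {\<alpha>. (\<Sum>i\<in>UNIV. \<alpha> i) \<le> d}"

definition poly_fun_deg_le :: "nat \<Rightarrow> (real^'n::finite \<Rightarrow> real) \<Rightarrow> bool" where
  "poly_fun_deg_le d f \<longleftrightarrow>
     (\<exists>c :: ('n \<Rightarrow> nat) \<Rightarrow> real.
        \<forall>x. f x = (\<Sum>\<alpha>\<in>exps_le d. c \<alpha> * (\<Prod>i\<in>UNIV. (x $ i) ^ (\<alpha> i))))"

definition partial :: "'n::finite \<Rightarrow> (real^'n \<Rightarrow> real) \<Rightarrow> real^'n \<Rightarrow> real" where
  "partial i g x = deriv (\<lambda>s. g (x + s *\<^sub>R axis i 1)) 0"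

definition steklov :: "(real^'n::finite \<Rightarrow> real) \<Rightarrow> real^'n \<Rightarrow> real \<Rightarrow> real" where
  "steklov f x t =
     integral (cbox (\<chi> i. x $ i - t) (\<chi> i. x $ i + t)) f / (2 * t) ^ CARD('n)"

end

theory Submission
  imports Defs
begin

(* Both sides are linear in f, so it suffices to treat a monomial x^a of degree |a| <= 4.
   By Fubini, its Steklov average is the product over i of the averages of s^(a i) over
   [x_i - t, x_i + t], and for k <= 5 the average of s^k over [z - t, z + t] is
   z^k + k(k-1)/6 z^(k-2) t^2 + k(k-1)(k-2)(k-3)/120 z^(k-4) t^4.
   Since |a| <= 4, either at most one exponent exceeds 1, or exactly two exponents equal 2
   and all others vanish; in each case expanding the product of the one-dimensional
   averages produces exactly the pure and mixed derivative terms. *)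

lemma integral_lborel_prod_Basis:
  fixes f :: "'a::euclidean_space \<Rightarrow> real \<Rightarrow> real"
  assumes int: "\<And>b. b \<in> Basis \<Longrightarrow> integrable lborel (f b)"
  shows "(\<integral>x. (\<Prod>b\<in>Basis. f b (x \<bullet> b)) \<partial>lborel) = (\<Prod>b\<in>Basis. \<integral>x. f b x \<partial>lborel)"
proof -
  interpret product_sigma_finite "\<lambda>_::'a. lborel::real measure" by standard
  have [measurable]: "\<And>b. b \<in> Basis \<Longrightarrow> f b \<in> borel_measurable borel"
    using int by auto
  have coord: "(\<Sum>b'\<in>Basis. y b' *\<^sub>R b') \<bullet> b = y b" if "b \<in> Basis" for y :: "'a \<Rightarrow> real" and b
    using that by (simp add: inner_sum_left inner_Basis if_distrib cong: if_cong)
  have "(\<integral>x. (\<Prod>b\<in>Basis. f b (x \<bullet> b)) \<partial>lborel) =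
     (\<integral>x. (\<Prod>b\<in>Basis. f b (x \<bullet> b)) \<partial>(distr (\<Pi>\<^sub>M b\<in>Basis. lborel) borel (\<lambda>f. \<Sum>b\<in>Basis. f b *\<^sub>R b)))"
    by (simp only: lborel_eq[where 'a='a])
  also have "\<dots> = (\<integral>y. (\<Prod>b\<in>Basis. f b ((\<Sum>b'\<in>Basis. y b' *\<^sub>R b') \<bullet> b)) \<partial>(\<Pi>\<^sub>M b\<in>Basis. lborel))"
    by (rule integral_distr) auto
  also have "\<dots> = (\<integral>y. (\<Prod>b\<in>Basis. f b (y b)) \<partial>(\<Pi>\<^sub>M b\<in>Basis. lborel))"
    by (simp add: coord cong: prod.cong)
  also have "\<dots> = (\<Prod>b\<in>Basis. \<integral>x. f b x \<partial>lborel)"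
    by (rule product_integral_prod) (auto intro: int)
  finally show ?thesis .
qed

lemma Basis_cart_real: "(Basis :: (real^'n::finite) set) = range (\<lambda>i. axis i 1)"
  by (auto simp: Basis_vec_def)

lemma prod_Basis_cart:
  fixes G :: "real^'n::finite \<Rightarrow> 'a::comm_monoid_mult"
  shows "(\<Prod>b\<in>Basis. G b) = (\<Prod>i\<in>UNIV. G (axis i 1))"
  unfolding Basis_cart_real by (subst prod.reindex) (auto simp: inj_on_def axis_eq_axis)

lemma integral_cbox_prod_cart:
  fixes g :: "'n::finite \<Rightarrow> real \<Rightarrow> real" and l u :: "real^'n"
  assumes cont: "\<And>i. continuous_on {l$i..u$i} (g i)"
  shows "integral (cbox l u) (\<lambda>y. \<Prod>i\<in>UNIV. g i (y$i)) = (\<Prod>i\<in>UNIV. integral {l$i..u$i} (g i))"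
proof -
  define idx where "idx b = (SOME i. b = axis i (1::real))" for b :: "real^'n"
  have idx: "idx (axis i 1) = i" for i
    unfolding idx_def by (rule some_equality) (auto simp: axis_eq_axis)
  have int_interval: "integrable lborel (\<lambda>s. indicator {l$i..u$i} s * g i s)" for i
    using borel_integrable_compact[OF compact_Icc cont] by simp
  have "continuous_on (cbox l u) (\<lambda>y. \<Prod>i\<in>UNIV. g i (y$i))"
  proof (intro continuous_on_prod ballI)
    fix i
    show "continuous_on (cbox l u) (\<lambda>y. g i (y$i))"
      by (rule continuous_on_compose2[OF cont[of i]]) (auto intro: continuous_intros simp: mem_box_cart)
  qed
  then have int_box: "set_integrable lborel (cbox l u) (\<lambda>y. \<Prod>i\<in>UNIV. g i (y$i))"
    unfolding set_integrable_def by (rule borel_integrable_compact[OF compact_cbox])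
  have "integral (cbox l u) (\<lambda>y. \<Prod>i\<in>UNIV. g i (y$i))
      = (\<integral>y. (\<Prod>b\<in>Basis. indicator {l \<bullet> b..u \<bullet> b} (y \<bullet> b) * g (idx b) (y \<bullet> b)) \<partial>lborel)"
    unfolding set_borel_integral_eq_integral(2)[OF int_box, symmetric] set_lebesgue_integral_def
    by (auto simp: prod_Basis_cart idx cart_eq_inner_axis prod.distrib indicator_def mem_box_cart
        intro!: Bochner_Integration.integral_cong)
  also have "\<dots> = (\<Prod>b\<in>Basis. \<integral>s. indicator {l \<bullet> b..u \<bullet> b} s * g (idx b) s \<partial>lborel)"
    by (rule integral_lborel_prod_Basis)
       (auto simp: Basis_vec_def idx cart_eq_inner_axis[symmetric] intro: int_interval)
  also have "\<dots> = (\<Prod>i\<in>UNIV. integral {l$i..u$i} (g i))"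
    using set_borel_integral_eq_integral(2)[of "{l$i..u$i}" "g i" for i]
    by (simp add: prod_Basis_cart idx cart_eq_inner_axis[symmetric] set_integrable_def
        set_lebesgue_integral_def int_interval)
  finally show ?thesis .
qed

lemma steklov_prod:
  fixes g :: "'n::finite \<Rightarrow> real \<Rightarrow> real"
  assumes "\<And>i. continuous_on {x$i - t..x$i + t} (g i)"
  shows "steklov (\<lambda>y. \<Prod>i\<in>UNIV. g i (y$i)) x t = (\<Prod>i\<in>UNIV. integral {x$i - t..x$i + t} (g i) / (2 * t))"
  using integral_cbox_prod_cart[of "\<chi> i. x $ i - t" "\<chi> i. x $ i + t" g] assms
  by (simp add: steklov_def prod_dividef)

lemma steklov_sum:
  assumes "finite S" "\<And>a. a \<in> S \<Longrightarrow> continuous_on UNIV (h a)"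
  shows "steklov (\<lambda>y. \<Sum>a\<in>S. c a * h a y) x t = (\<Sum>a\<in>S. c a * steklov (h a) x t)"
proof -
  have "(\<lambda>y. c a * h a y) integrable_on cbox l u" if "a \<in> S" for a l u
    using assms(2)[OF that] by (intro integrable_continuous continuous_intros) (auto intro: continuous_on_subset)
  then show ?thesis
    unfolding steklov_def using assms(1) by (simp add: integral_sum sum_divide_distrib)
qed

definition monomial :: "('n::finite \<Rightarrow> nat) \<Rightarrow> real^'n \<Rightarrow> real" where
  "monomial \<alpha> y = (\<Prod>i\<in>UNIV. y$i ^ \<alpha> i)"

lemma continuous_on_monomial: "continuous_on S (monomial \<alpha>)"
  unfolding monomial_def by (intro continuous_intros)

lemma monomial_upd:
  "monomial (\<alpha>(i := k)) y = y$i ^ k * (\<Prod>j\<in>UNIV - {i}. y$j ^ \<alpha> j)"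
  unfolding monomial_def by (subst prod.remove[of UNIV i]) (auto intro!: prod.cong)

lemma monomial_split: "monomial \<alpha> y = y$i ^ \<alpha> i * (\<Prod>j\<in>UNIV - {i}. y$j ^ \<alpha> j)"
  using monomial_upd[of \<alpha> i "\<alpha> i" y] by simp

lemma monomial_two_vars:
  assumes "\<And>i. i \<noteq> p \<Longrightarrow> i \<noteq> q \<Longrightarrow> \<alpha> i = 0" "p \<noteq> q"
  shows "monomial \<alpha> y = y$p ^ \<alpha> p * y$q ^ \<alpha> q"
proof -
  have "monomial \<alpha> y = (\<Prod>i\<in>{p, q}. y$i ^ \<alpha> i)"
    unfolding monomial_def by (rule prod.mono_neutral_right) (use assms in auto)
  then show ?thesis using assms(2) by simp
qed

lemma falling_prod_eq_0: "k < m \<Longrightarrow> (\<Prod>r<m. real (k - r)) = 0"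
  by (rule prod_zero) auto

definition avg_power :: "nat \<Rightarrow> real \<Rightarrow> real \<Rightarrow> real" where
  "avg_power k z t = integral {z - t..z + t} (\<lambda>s. s ^ k) / (2 * t)"

lemma avg_power_eq:
  assumes "k \<le> 5" "t > 0"
  shows "avg_power k z t = z ^ k + t^2 / 6 * (\<Prod>r<2. real (k - r)) * z ^ (k - 2)
           + t^4 / 120 * (\<Prod>r<4. real (k - r)) * z ^ (k - 4)"
proof -
  have "((\<lambda>s. s ^ k) has_integral ((z + t) ^ Suc k / Suc k - (z - t) ^ Suc k / Suc k)) {z - t..z + t}"
  proof (rule fundamental_theorem_of_calculus)
    fix s :: real
    have "((\<lambda>s. s ^ Suc k / Suc k) has_real_derivative s ^ k) (at s)"
      using DERIV_cdivide[OF DERIV_pow[of "Suc k" s], of "Suc k"] by simp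
    then show "((\<lambda>s. s ^ Suc k / Suc k) has_vector_derivative s ^ k) (at s within {z - t..z + t})"
      by (simp add: has_real_derivative_iff_has_vector_derivative has_vector_derivative_at_within)
  qed (use \<open>t > 0\<close> in simp)
  then have avg: "avg_power k z t = ((z + t) ^ Suc k - (z - t) ^ Suc k) / (Suc k * (2 * t))"
    by (simp add: avg_power_def integral_unique diff_divide_distrib)
  have "k = 0 \<or> k = 1 \<or> k = 2 \<or> k = 3 \<or> k = 4 \<or> k = 5"
    using assms(1) by auto
  then show ?thesis
    using \<open>t > 0\<close> unfolding avg
    by (elim disjE) (simp_all add: field_simps eval_nat_numeral)
qed

lemma avg_power_le_1: "k \<le> 1 \<Longrightarrow> t > 0 \<Longrightarrow> avg_power k z t = z ^ k"
  by (simp add: avg_power_eq falling_prod_eq_0)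

lemma steklov_monomial: "steklov (monomial \<alpha>) x t = (\<Prod>i\<in>UNIV. avg_power (\<alpha> i) (x$i) t)"
  using steklov_prod[of x t "\<lambda>i s. s ^ \<alpha> i"]
  by (simp add: avg_power_def monomial_def[abs_def] continuous_on_power continuous_on_id)

lemma has_field_derivative_monomial_axis:
  "((\<lambda>s. monomial \<alpha> (y + s *\<^sub>R axis i 1)) has_field_derivative
     real (\<alpha> i) * monomial (\<alpha>(i := \<alpha> i - 1)) y) (at 0)"
proof -
  have shift: "monomial \<alpha> (y + s *\<^sub>R axis i 1) = (y$i + s) ^ \<alpha> i * (\<Prod>j\<in>UNIV - {i}. y$j ^ \<alpha> j)" for s
    unfolding monomial_def by (subst prod.remove[of UNIV i]) (auto intro!: prod.cong simp: axis_def)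
  have "((\<lambda>s. (y$i + s) ^ \<alpha> i * (\<Prod>j\<in>UNIV - {i}. y$j ^ \<alpha> j)) has_field_derivative
          real (\<alpha> i) * (y$i + 0) ^ (\<alpha> i - 1) * 1 * (\<Prod>j\<in>UNIV - {i}. y$j ^ \<alpha> j)) (at 0)"
    by (intro DERIV_cmult_right DERIV_power derivative_eq_intros) auto
  then show ?thesis
    by (simp add: shift monomial_upd mult.assoc)
qed

lemma partial_sum_monomials:
  assumes "finite S"
  shows "partial i (\<lambda>y. \<Sum>a\<in>S. c a * monomial (g a) y) =
         (\<lambda>y. \<Sum>a\<in>S. (c a * real (g a i)) * monomial ((g a)(i := g a i - 1)) y)"
proof
  fix y
  have "((\<lambda>s. \<Sum>a\<in>S. c a * monomial (g a) (y + s *\<^sub>R axis i 1)) has_field_derivative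
         (\<Sum>a\<in>S. c a * (real (g a i) * monomial ((g a)(i := g a i - 1)) y))) (at 0)"
    by (intro DERIV_sum DERIV_cmult has_field_derivative_monomial_axis)
  then show "partial i (\<lambda>y. \<Sum>a\<in>S. c a * monomial (g a) y) y =
      (\<Sum>a\<in>S. (c a * real (g a i)) * monomial ((g a)(i := g a i - 1)) y)"
    unfolding partial_def by (simp add: DERIV_imp_deriv mult.assoc)
qed

(* (\<Prod>r<m. real (k - r)) is the falling factorial k(k-1)...(k-m+1); it vanishes for k < m,
   which is exactly when the truncated exponent k - m would give the wrong monomial. *)
lemma partial_funpow_sum_monomials:
  assumes "finite S"
  shows "(partial i ^^ m) (\<lambda>y. \<Sum>a\<in>S. c a * monomial (g a) y) =
         (\<lambda>y. \<Sum>a\<in>S. (c a * (\<Prod>r<m. real (g a i - r))) * monomial ((g a)(i := g a i - m)) y)"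
proof (induction m)
  case 0
  then show ?case by simp
next
  case (Suc m)
  have "(partial i ^^ Suc m) (\<lambda>y. \<Sum>a\<in>S. c a * monomial (g a) y)
      = partial i (\<lambda>y. \<Sum>a\<in>S. (c a * (\<Prod>r<m. real (g a i - r))) * monomial ((g a)(i := g a i - m)) y)"
    by (simp only: funpow.simps(2) comp_apply Suc.IH)
  also have "\<dots> = (\<lambda>y. \<Sum>a\<in>S. (c a * (\<Prod>r<Suc m. real (g a i - r))) * monomial ((g a)(i := g a i - Suc m)) y)"
    by (simp only: partial_sum_monomials[OF assms] fun_upd_same fun_upd_upd)
       (simp add: mult.assoc)
  finally show ?case .
qed

lemma partial_sq_sum_monomials:
  assumes "finite S"
  shows "partial i (partial i (\<lambda>y. \<Sum>a\<in>S. c a * monomial a y)) =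
    (\<lambda>y. \<Sum>a\<in>S. c a * ((\<Prod>r<2. real (a i - r)) * monomial (a(i := a i - 2)) y))"
  using partial_funpow_sum_monomials[OF assms, where i=i and m=2 and c=c and g="\<lambda>a. a"]
  by (simp add: numeral_2_eq_2 mult.assoc)

lemma partial_4_sum_monomials:
  assumes "finite S"
  shows "partial i (partial i (partial i (partial i (\<lambda>y. \<Sum>a\<in>S. c a * monomial a y)))) =
    (\<lambda>y. \<Sum>a\<in>S. c a * ((\<Prod>r<4. real (a i - r)) * monomial (a(i := a i - 4)) y))"
  using partial_funpow_sum_monomials[OF assms, where i=i and m=4 and c=c and g="\<lambda>a. a"]
  by (simp add: eval_nat_numeral mult.assoc)

lemma partial_sq_partial_sq_sum_monomials:
  assumes "finite S" "i \<noteq> j"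
  shows "partial i (partial i (partial j (partial j (\<lambda>y. \<Sum>a\<in>S. c a * monomial a y)))) =
    (\<lambda>y. \<Sum>a\<in>S. c a * ((\<Prod>r<2. real (a j - r)) * (\<Prod>r<2. real (a i - r))
                        * monomial (a(j := a j - 2, i := a i - 2)) y))"
proof -
  have twice: "partial k (partial k g) = (partial k ^^ 2) g" for k g
    by (simp add: numeral_2_eq_2)
  show ?thesis
    unfolding twice partial_funpow_sum_monomials[OF assms(1), where g="\<lambda>a. a"]
      partial_funpow_sum_monomials[OF assms(1), where g="\<lambda>a. a(j := a j - 2)"]
    using assms(2) by (simp add: mult_ac)
qed

definition steklov_expansion :: "((real, 'n::{finite,linorder}) vec \<Rightarrow> real) \<Rightarrow> (real, 'n) vec \<Rightarrow> real \<Rightarrow> real" where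
  "steklov_expansion f x t =
     f x + t^2 / 6 * (\<Sum>i\<in>UNIV. partial i (partial i f) x)
     + ((1/120) * (\<Sum>i\<in>UNIV. partial i (partial i (partial i (partial i f))) x)
        + (1/36) * (\<Sum>(i,j)\<in>{(i,j). i < j}. partial i (partial i (partial j (partial j f))) x)) * t^4"

lemma steklov_expansion_sum_monomials_eval:
  fixes c :: "('n::{finite,linorder} \<Rightarrow> nat) \<Rightarrow> real"
  assumes "finite S"
  shows "steklov_expansion (\<lambda>y. \<Sum>a\<in>S. c a * monomial a y) x t = (\<Sum>a\<in>S. c a *
     (monomial a x + t^2 / 6 * (\<Sum>i\<in>UNIV. (\<Prod>r<2. real (a i - r)) * monomial (a(i := a i - 2)) x)
      + (1/120 * (\<Sum>i\<in>UNIV. (\<Prod>r<4. real (a i - r)) * monomial (a(i := a i - 4)) x)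
         + 1/36 * (\<Sum>(i,j)\<in>{(i,j). i < j}. (\<Prod>r<2. real (a j - r)) * (\<Prod>r<2. real (a i - r))
                     * monomial (a(j := a j - 2, i := a i - 2)) x)) * t^4))"
proof -
  have mixed: "(\<Sum>(i,j)\<in>{(i,j). i < j}. partial i (partial i (partial j (partial j (\<lambda>y. \<Sum>a\<in>S. c a * monomial a y)))) x)
      = (\<Sum>(i,j)\<in>{(i,j). i < j}. \<Sum>a\<in>S. c a * ((\<Prod>r<2. real (a j - r)) * (\<Prod>r<2. real (a i - r))
                        * monomial (a(j := a j - 2, i := a i - 2)) x))"
    by (rule sum.cong) (auto simp: partial_sq_partial_sq_sum_monomials[OF assms])
  show ?thesis
    unfolding steklov_expansion_def mixed partial_4_sum_monomials[OF assms]
    unfolding partial_sq_sum_monomials[OF assms]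
    by (simp add: sum.distrib sum_distrib_left sum_distrib_right case_prod_beta algebra_simps
        sum.swap[where A = UNIV] sum.swap[where A = "{(i,j). i < j}"])
qed

lemma steklov_expansion_monomial:
  fixes a :: "'n::{finite,linorder} \<Rightarrow> nat"
  shows "steklov_expansion (monomial a) x t =
     monomial a x + t^2 / 6 * (\<Sum>i\<in>UNIV. (\<Prod>r<2. real (a i - r)) * monomial (a(i := a i - 2)) x)
     + (1/120 * (\<Sum>i\<in>UNIV. (\<Prod>r<4. real (a i - r)) * monomial (a(i := a i - 4)) x)
        + 1/36 * (\<Sum>(i,j)\<in>{(i,j). i < j}. (\<Prod>r<2. real (a j - r)) * (\<Prod>r<2. real (a i - r))
                    * monomial (a(j := a j - 2, i := a i - 2)) x)) * t^4"
proof -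
  have "monomial a = (\<lambda>y. \<Sum>b\<in>{a}. 1 * monomial b y)"
    by simp
  then show ?thesis
    using steklov_expansion_sum_monomials_eval[of "{a}" "\<lambda>_. 1" x t] by simp
qed

lemma steklov_expansion_sum_monomials:
  fixes c :: "('n::{finite,linorder} \<Rightarrow> nat) \<Rightarrow> real"
  assumes "finite S"
  shows "steklov_expansion (\<lambda>y. \<Sum>a\<in>S. c a * monomial a y) x t =
    (\<Sum>a\<in>S. c a * steklov_expansion (monomial a) x t)"
  by (simp only: steklov_expansion_sum_monomials_eval[OF assms] steklov_expansion_monomial)

lemma exponents_deg_le_4_cases:
  fixes a :: "'n::{finite,linorder} \<Rightarrow> nat"
  assumes deg: "sum a UNIV \<le> 4"
  obtains "\<And>i. a i \<le> 1"
  | p where "\<And>i. i \<noteq> p \<Longrightarrow> a i \<le> 1"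
  | p q where "p < q" "a p = 2" "a q = 2" "\<And>i. i \<noteq> p \<Longrightarrow> i \<noteq> q \<Longrightarrow> a i = 0"
proof -
  have sum_le: "sum a I \<le> 4" for I
    using sum_mono2[of UNIV I a] deg by auto
  show ?thesis
  proof (cases "\<forall>i. a i \<le> 1")
    case True
    then show ?thesis using that(1) by blast
  next
    case False
    then obtain p where p: "2 \<le> a p" by (auto simp: not_le Suc_le_eq numeral_2_eq_2)
    show ?thesis
    proof (cases "\<forall>i. i \<noteq> p \<longrightarrow> a i \<le> 1")
      case True
      then show ?thesis using that(2) by blast
    next
      case False
      then obtain q where q: "q \<noteq> p" "2 \<le> a q" by (auto simp: not_le Suc_le_eq numeral_2_eq_2)
      with p sum_le[of "{p, q}"] have pq: "a p = 2" "a q = 2" by auto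
      have rest: "a l = 0" if "l \<noteq> p" "l \<noteq> q" for l
        using sum_le[of "{p, q, l}"] pq q that by auto
      show ?thesis
      proof (cases "p < q")
        case True
        then show ?thesis using that(3) pq rest by blast
      next
        case False
        then have "q < p" using q(1) by auto
        then show ?thesis using that(3)[of q p] pq rest by blast
      qed
    qed
  qed
qed

lemma steklov_monomial_multilinear:
  fixes a :: "'n::{finite,linorder} \<Rightarrow> nat"
  assumes a: "\<And>i. a i \<le> 1" and t: "t > 0"
  shows "steklov (monomial a) x t = steklov_expansion (monomial a) x t"
proof -
  have vanish: "(\<Prod>r<2. real (a i - r)) = 0" "(\<Prod>r<4. real (a i - r)) = 0" for i
    using a[of i] by (simp_all add: falling_prod_eq_0)
  show ?thesis
    unfolding steklov_monomial steklov_expansion_monomial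
    using a t by (simp add: vanish avg_power_le_1 monomial_def)
qed

lemma steklov_monomial_one_power:
  fixes a :: "'n::{finite,linorder} \<Rightarrow> nat"
  assumes a: "\<And>i. i \<noteq> p \<Longrightarrow> a i \<le> 1" and ap: "a p \<le> 5" and t: "t > 0"
  shows "steklov (monomial a) x t = steklov_expansion (monomial a) x t"
proof -
  have off_p: "avg_power (a i) (x$i) t = x$i ^ a i"
      "(\<Prod>r<2. real (a i - r)) = 0" "(\<Prod>r<4. real (a i - r)) = 0" if "i \<noteq> p" for i
    using a[OF that] t by (simp_all add: avg_power_le_1 falling_prod_eq_0)
  define R where "R = (\<Prod>j\<in>UNIV - {p}. x$j ^ a j)"
  have P: "(\<Prod>i\<in>UNIV. avg_power (a i) (x$i) t) = avg_power (a p) (x$p) t * R"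
    unfolding R_def by (subst prod.remove[of UNIV p]) (auto simp: off_p intro!: prod.cong)
  have L2: "(\<Sum>i\<in>UNIV. (\<Prod>r<2. real (a i - r)) * monomial (a(i := a i - 2)) x)
      = (\<Prod>r<2. real (a p - r)) * (x$p ^ (a p - 2) * R)"
    by (subst sum.mono_neutral_right[of UNIV "{p}"]) (auto simp: off_p monomial_upd R_def)
  have L4: "(\<Sum>i\<in>UNIV. (\<Prod>r<4. real (a i - r)) * monomial (a(i := a i - 4)) x)
      = (\<Prod>r<4. real (a p - r)) * (x$p ^ (a p - 4) * R)"
    by (subst sum.mono_neutral_right[of UNIV "{p}"]) (auto simp: off_p monomial_upd R_def)
  have M: "(\<Sum>(i,j)\<in>{(i,j). i < j}. (\<Prod>r<2. real (a j - r)) * (\<Prod>r<2. real (a i - r))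
      * monomial (a(j := a j - 2, i := a i - 2)) x) = 0"
  proof (intro sum.neutral ballI, clarify)
    fix i j :: 'n
    assume "i < j"
    then have "i \<noteq> p \<or> j \<noteq> p" by auto
    then show "(\<Prod>r<2. real (a j - r)) * (\<Prod>r<2. real (a i - r))
        * monomial (a(j := a j - 2, i := a i - 2)) x = 0"
      by (elim disjE) (simp_all add: off_p)
  qed
  show ?thesis
    unfolding steklov_monomial steklov_expansion_monomial P L2 L4 M
    using avg_power_eq[OF ap t, of "x$p"]
    by (simp add: monomial_split[of a x p] R_def algebra_simps)
qed

lemma steklov_monomial_two_squares:
  fixes a :: "'n::{finite,linorder} \<Rightarrow> nat"
  assumes pq: "p < q" and ap: "a p = 2" and aq: "a q = 2"
    and a: "\<And>i. i \<noteq> p \<Longrightarrow> i \<noteq> q \<Longrightarrow> a i = 0" and t: "t > 0"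
  shows "steklov (monomial a) x t = steklov_expansion (monomial a) x t"
proof -
  have off_pq: "avg_power (a i) (x$i) t = 1" "(\<Prod>r<2. real (a i - r)) = 0"
    if "i \<noteq> p" "i \<noteq> q" for i
    using a[OF that] t by (simp_all add: avg_power_le_1)
  have no_quartic: "(\<Prod>r<4. real (a i - r)) = 0" for i
    using ap aq a by (cases "i = p \<or> i = q") (auto simp: falling_prod_eq_0)
  have mon: "monomial \<beta> x = x$p ^ \<beta> p * x$q ^ \<beta> q"
    if "\<And>i. i \<noteq> p \<Longrightarrow> i \<noteq> q \<Longrightarrow> \<beta> i = 0" for \<beta>
    using monomial_two_vars[of p q \<beta> x] that pq by simp
  have avg2: "avg_power 2 z t = z ^ 2 + t ^ 2 / 3" for z
    using avg_power_eq[of 2 t z] t falling_prod_eq_0[of 2 4] by (simp add: numeral_2_eq_2)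
  have P: "(\<Prod>i\<in>UNIV. avg_power (a i) (x$i) t) = avg_power 2 (x$p) t * avg_power 2 (x$q) t"
    by (subst prod.mono_neutral_right[of UNIV "{p, q}"]) (use pq ap aq in \<open>auto simp: off_pq\<close>)
  have L2: "(\<Sum>i\<in>UNIV. (\<Prod>r<2. real (a i - r)) * monomial (a(i := a i - 2)) x)
      = 2 * x$q ^ 2 + 2 * x$p ^ 2"
    by (subst sum.mono_neutral_right[of UNIV "{p, q}"])
       (use pq ap aq a in \<open>auto simp: off_pq mon numeral_2_eq_2\<close>)
  have M: "(\<Sum>(i,j)\<in>{(i,j). i < j}. (\<Prod>r<2. real (a j - r)) * (\<Prod>r<2. real (a i - r))
      * monomial (a(j := a j - 2, i := a i - 2)) x) = 4"
  proof -
    have off_diag: "(\<Prod>r<2. real (a j - r)) * (\<Prod>r<2. real (a i - r)) = 0"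
      if "(i, j) \<in> {(i, j). i < j} - {(p, q)}" for i j
    proof -
      from that pq have "i \<notin> {p, q} \<or> j \<notin> {p, q}" by auto
      then show ?thesis by (elim disjE) (simp_all add: off_pq)
    qed
    have "(\<Sum>(i,j)\<in>{(i,j). i < j}. (\<Prod>r<2. real (a j - r)) * (\<Prod>r<2. real (a i - r))
        * monomial (a(j := a j - 2, i := a i - 2)) x)
        = (\<Prod>r<2. real (a q - r)) * (\<Prod>r<2. real (a p - r)) * monomial (a(q := a q - 2, p := a p - 2)) x"
      by (subst sum.mono_neutral_right[of _ "{(p, q)}"]) (use pq off_diag in fastforce)+
    then show ?thesis
      using pq ap aq a by (simp add: mon numeral_2_eq_2)
  qed
  have Ma: "monomial a x = x$p ^ 2 * x$q ^ 2"
    using mon[OF a] ap aq by simp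
  show ?thesis
    unfolding steklov_monomial steklov_expansion_monomial P L2 M Ma avg2
    by (simp add: no_quartic power2_eq_square power4_eq_xxxx algebra_simps)
qed

lemma steklov_monomial_deg_le_4:
  fixes a :: "'n::{finite,linorder} \<Rightarrow> nat"
  assumes "sum a UNIV \<le> 4" and "t > 0"
  shows "steklov (monomial a) x t = steklov_expansion (monomial a) x t"
  using assms(1)
proof (cases rule: exponents_deg_le_4_cases)
  case 1
  then show ?thesis using steklov_monomial_multilinear assms(2) by blast
next
  case (2 p)
  moreover have "a p \<le> 5"
    using member_le_sum[of p UNIV a] assms(1) by simp
  ultimately show ?thesis using steklov_monomial_one_power assms(2) by blast
next
  case (3 p q)
  then show ?thesis using steklov_monomial_two_squares assms(2) by blast
qed

lemma finite_exps_le: "finite (exps_le d :: ('n::finite \<Rightarrow> nat) set)"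
proof (rule finite_subset)
  show "exps_le d \<subseteq> PiE (UNIV :: 'n set) (\<lambda>_. {..d})"
  proof
    fix \<alpha> :: "'n \<Rightarrow> nat"
    assume "\<alpha> \<in> exps_le d"
    then have "\<alpha> i \<le> d" for i
      using member_le_sum[of i UNIV \<alpha>] by (simp add: exps_le_def)
    then show "\<alpha> \<in> PiE UNIV (\<lambda>_. {..d})"
      by (simp add: PiE_UNIV_domain)
  qed
qed (simp add: finite_PiE)

theorem theorem1:
  fixes f :: "(real, 'n::{finite,linorder}) vec \<Rightarrow> real" and x :: "(real, 'n) vec" and t :: real
  assumes "poly_fun_deg_le 4 f" and "t > 0"
  shows "steklov f x t =
           f x + t^2 / 6 * (\<Sum>i\<in>UNIV. partial i (partial i f) x)
           + ((1/120) * (\<Sum>i\<in>UNIV. partial i (partial i (partial i (partial i f))) x)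
              + (1/36) * (\<Sum>(i,j)\<in>{(i,j). i < j}.
                            partial i (partial i (partial j (partial j f))) x)) * t^4"
proof -
  obtain c where f: "f = (\<lambda>y. \<Sum>a\<in>exps_le 4. c a * monomial a y)"
    using assms(1) unfolding poly_fun_deg_le_def monomial_def by blast
  have "steklov f x t = (\<Sum>a\<in>exps_le 4. c a * steklov (monomial a) x t)"
    unfolding f by (rule steklov_sum) (auto intro: finite_exps_le continuous_on_monomial)
  also have "\<dots> = (\<Sum>a\<in>exps_le 4. c a * steklov_expansion (monomial a) x t)"
    by (intro sum.cong refl) (simp add: steklov_monomial_deg_le_4 exps_le_def assms(2))
  also have "\<dots> = steklov_expansion f x t"
    unfolding f by (rule steklov_expansion_sum_monomials[symmetric, OF finite_exps_le])
  finally show ?thesis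
    unfolding steklov_expansion_def .
qed

end
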